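(* Let $M_\sharp=X_\sharp X_\sharp^\top$ with $X_\sharp\in\mathbb{R}^{d\times r}$ of rank $r$, let $\mathcal{A}\colon\mathbb{R}^{d\times d}\to\mathbb{R}^m$ be linear and $b\in\mathbb{R}^m$. Suppose there exist a set $\mathcal{I}\subset\{1,\dots,m\}$ and a constant $\kappa_3>0$ such that (i) $b_i=\mathcal{A}(M_\sharp)_i$ for all $i\notin\mathcal{I}$, and (ii) for every $W\in\mathbb{R}^{d\times d}$ of rank at most $2r$, $$\kappa_3\|W\|_F\le\frac1m\|\mathcal{A}_{\mathcal{I}^c}(W)\|_1-\frac1m\|\mathcal{A}_{\mathcal{I}}(W)\|_1.$$ Let $f(X)=\frac1m\|\mathcal{A}(XX^\top)-b\|_1$ for $X\in\mathbb{R}^{d\times r}$. Then for all $X\in\mathbb{R}^{d\times r}$, $$f(X)-f(X_\sharp)\ge\kappa_3\sqrt{2(\sqrt2-1)}\,\sigma_r(X_\sharp)\,\mathrm{dist}\big(X,\mathcal{D}^*(M_\sharp)\big).$$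
   Context: For $\mathcal{J}\subset\{1,\dots,m\}$, $\mathcal{A}_{\mathcal{J}}(W)=(\mathcal{A}(W)_i)_{i\in\mathcal{J}}$, and $\mathcal{I}^c$ is the complement of $\mathcal{I}$. $\mathcal{D}^*(M_\sharp)=\{X_\sharp R:R\in O(r)\}$, where $O(r)$ is the orthogonal group, and $\mathrm{dist}$ is Frobenius distance. $\sigma_r$ denotes the $r$-th largest singular value. *)

theory Defs
  imports "HOL-Analysis.Analysis"
begin

definition mat_eigenvalues :: "real^'n^'n \<Rightarrow> real set" where
  "mat_eigenvalues A = {c. \<exists>v. v \<noteq> 0 \<and> A *v v = c *\<^sub>R v}"

text \<open>For a d x r matrix X (columns indexed by 'r), the singular values are the square
  roots of the r eigenvalues (with multiplicity) of X^T X; the r-th largest one is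
  therefore the square root of the smallest eigenvalue of X^T X.\<close>
definition sigma_r :: "real^'r^'d \<Rightarrow> real" where
  "sigma_r X = sqrt (Min (mat_eigenvalues (transpose X ** X)))"

definition l1_on :: "'m set \<Rightarrow> real^'m \<Rightarrow> real" where
  "l1_on J y = (\<Sum>i\<in>J. \<bar>y $ i\<bar>)"

definition sol_set :: "real^'r^'d \<Rightarrow> (real^'r^'d) set" where
  "sol_set Xs = {Xs ** R | R. orthogonal_matrix R}"

definition obj_f :: "(real^'d^'d \<Rightarrow> real^'m) \<Rightarrow> real^'m \<Rightarrow> real^'r^'d \<Rightarrow> real" where
  "obj_f A b X = (1 / real CARD('m)) * l1_on UNIV (A (X ** transpose X) - b)"

end

theory Submission
  imports Defs
begin

text \<open>Let \<open>U = Xs R\<close> be a point of \<open>D*(M)\<close> nearest to \<open>X\<close>; it exists because \<open>O(r)\<close> is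
  compact. Testing the optimality of \<open>R\<close> against reflections and against products of two
  reflections shows that \<open>U\<^sup>T X\<close> is symmetric positive semidefinite. With \<open>D = X - U\<close>, the matrix
  \<open>W = X X\<^sup>T - M\<close> satisfies
  \<open>|W|\<^sup>2 = 2<U\<^sup>T U, D\<^sup>T D> + 2|U\<^sup>T D|\<^sup>2 + 4<U\<^sup>T D, D\<^sup>T D> + |D\<^sup>T D|\<^sup>2\<close>, and completing the square
  using the semidefiniteness of \<open>U\<^sup>T X = U\<^sup>T U + U\<^sup>T D\<close> gives
  \<open>|W|\<^sup>2 \<ge> 2(sqrt 2 - 1) \<sigma>\<^sub>r(Xs)\<^sup>2 |D|\<^sup>2\<close>. As \<open>W\<close> has rank at most \<open>2r\<close>, sharpness bounds
  \<open>\<kappa>\<^sub>3 |W|\<close> by the mass of \<open>A(W)\<close> off \<open>I\<close> minus its mass on \<open>I\<close>; by the triangle inequality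
  and exactness off \<open>I\<close> this is at most \<open>f(X) - f(Xs)\<close>.\<close>

lemma matrix_add_rdistrib: "((A :: real^'k^'m) + B) ** (C :: real^'n^'k) = A ** C + B ** C"
  by (simp add: matrix_matrix_mult_def vec_eq_iff distrib_right sum.distrib)

lemma transpose_add: "transpose ((A :: real^'n^'m) + B) = transpose A + transpose B"
  by (simp add: transpose_def vec_eq_iff)

lemma inner_matrix_eq_trace: "inner A B = trace (transpose A ** (B :: real^'n^'m))"
proof -
  have "inner A B = (\<Sum>i\<in>UNIV. \<Sum>j\<in>UNIV. A$i$j * B$i$j)"
    by (simp add: inner_vec_def)
  also have "\<dots> = (\<Sum>j\<in>UNIV. \<Sum>i\<in>UNIV. A$i$j * B$i$j)"
    by (rule sum.swap)
  also have "\<dots> = trace (transpose A ** B)"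
    by (simp add: trace_def matrix_matrix_mult_def transpose_def)
  finally show ?thesis .
qed

lemma inner_matrix_mult_left:
  fixes A :: "real^'k^'m" and B :: "real^'n^'k" and C :: "real^'n^'m"
  shows "inner (A ** B) C = inner B (transpose A ** C)"
  by (simp add: inner_matrix_eq_trace matrix_transpose_mul matrix_mul_assoc)

lemma inner_matrix_mult_right:
  fixes A :: "real^'k^'m" and B :: "real^'n^'k" and C :: "real^'n^'m"
  shows "inner (A ** B) C = inner A (C ** transpose B)"
proof -
  have "inner (A ** B) C = trace (transpose B ** (transpose A ** C))"
    by (simp add: inner_matrix_eq_trace matrix_transpose_mul matrix_mul_assoc)
  also have "\<dots> = trace ((transpose A ** C) ** transpose B)"
    by (rule trace_mul_sym)
  finally show ?thesis
    by (simp add: inner_matrix_eq_trace matrix_mul_assoc)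
qed

lemma inner_transpose_transpose: "inner (transpose A) (transpose B) = inner A (B :: real^'n^'m)"
proof -
  have "inner (transpose A) (transpose B) = trace (A ** transpose B)"
    by (simp add: inner_matrix_eq_trace)
  also have "\<dots> = trace (transpose B ** A)"
    by (rule trace_mul_sym)
  also have "\<dots> = inner B A"
    by (simp add: inner_matrix_eq_trace)
  finally show ?thesis
    by (simp add: inner_commute)
qed

lemma inner_transpose_mult_self:
  fixes D :: "real^'r^'d" and Q :: "real^'r^'r"
  shows "inner Q (transpose D ** D) = (\<Sum>a\<in>UNIV. inner (D $ a) (Q *v D $ a))"
proof -
  have "inner Q (transpose D ** D) = inner (transpose Q) (transpose D ** D)"
    by (metis inner_transpose_transpose matrix_transpose_mul transpose_transpose)
  also have "\<dots> = inner (D ** transpose Q) D"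
    by (simp add: inner_matrix_mult_left)
  also have "\<dots> = (\<Sum>a\<in>UNIV. inner (D $ a) (Q *v D $ a))"
    by (simp add: inner_vec_def matrix_matrix_mult_def matrix_vector_mult_def transpose_def mult.commute)
  finally show ?thesis .
qed

lemma norm_matrix_sq_eq_sum_rows: "(norm (D :: real^'n^'m))\<^sup>2 = (\<Sum>a\<in>UNIV. (norm (D $ a))\<^sup>2)"
  by (simp add: power2_norm_eq_inner inner_vec_def)

lemma inner_gram_mult: "inner v ((transpose X ** X) *v w) = inner (X *v v) (X *v (w :: real^'n))"
  for X :: "real^'n^'m"
proof -
  have "inner ((transpose X ** X) *v w) v = inner (X *v w) (X *v v)"
    by (simp add: matrix_vector_mul_assoc[symmetric] dot_lmul_matrix)
  then show ?thesis
    by (simp add: inner_commute)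
qed

lemma norm_add_scaleR_sq:
  "(norm (a + t *\<^sub>R b))\<^sup>2 = (norm a)\<^sup>2 + 2 * t * inner a b + t\<^sup>2 * (norm b)\<^sup>2"
  for a b :: "'a::real_inner"
  unfolding power2_norm_eq_inner
  by (simp add: inner_add_left inner_add_right inner_commute[of b a] power2_eq_square algebra_simps)

lemma nonneg_linear_quadratic_imp_zero:
  fixes c d :: real
  assumes "\<And>t. 0 \<le> t * c + t\<^sup>2 * d"
  shows "c = 0"
proof (rule ccontr)
  assume "c \<noteq> 0"
  define e where "e = \<bar>d\<bar> + 1"
  have e: "e > 0" "d < e"
    by (auto simp: e_def)
  have "(- c / e) * c + (- c / e)\<^sup>2 * d = c\<^sup>2 * (d - e) / e\<^sup>2"
    using e by (simp add: field_simps power2_eq_square)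
  also have "\<dots> < 0"
    using \<open>c \<noteq> 0\<close> e by (intro divide_neg_pos mult_pos_neg) auto
  finally show False
    using assms[of "- c / e"] by simp
qed

section \<open>Perturbation of a Gram matrix\<close>

lemma norm_gram_update_expansion:
  fixes U D :: "real^'r^'d"
  defines "S \<equiv> transpose U ** D" and "K \<equiv> transpose D ** D"
  shows "(norm ((U + D) ** transpose (U + D) - U ** transpose U))\<^sup>2
       = 2 * inner (transpose U ** U) K + 2 * inner (transpose S) S
         + 4 * inner (transpose S) K + (norm K)\<^sup>2"
proof -
  define A where "A = U ** transpose D"
  define C where "C = D ** transpose D"
  have W: "(U + D) ** transpose (U + D) - U ** transpose U = A + transpose A + C"
    by (simp add: A_def C_def matrix_transpose_mul matrix_add_ldistrib matrix_add_rdistrib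
        transpose_add algebra_simps)
  have St: "transpose S = transpose D ** U"
    by (simp add: S_def matrix_transpose_mul)
  have AA: "inner A A = inner (transpose U ** U) K"
  proof -
    have "inner A A = inner U (U ** K)"
      by (simp add: A_def K_def inner_matrix_mult_right matrix_mul_assoc)
    also have "\<dots> = inner (transpose U ** U) K"
      by (simp add: inner_matrix_mult_left)
    finally show ?thesis .
  qed
  have AAt: "inner A (transpose A) = inner (transpose S) S"
  proof -
    have "inner A (transpose A) = inner U (D ** S)"
      by (simp add: A_def S_def inner_matrix_mult_right matrix_transpose_mul matrix_mul_assoc)
    also have "\<dots> = inner (transpose S) S"
      by (metis St inner_commute inner_matrix_mult_left)
    finally show ?thesis .
  qed
  have AC: "inner A C = inner (transpose S) K"
  proof -
    have "inner A C = inner U (D ** K)"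
      by (simp add: A_def C_def K_def inner_matrix_mult_right matrix_mul_assoc)
    also have "\<dots> = inner (transpose S) K"
      by (metis St inner_commute inner_matrix_mult_left)
    finally show ?thesis .
  qed
  have AtC: "inner (transpose A) C = inner A C"
    by (metis C_def inner_transpose_transpose matrix_transpose_mul transpose_transpose)
  have CC: "inner C C = (norm K)\<^sup>2"
  proof -
    have "inner C C = inner D (D ** K)"
      by (simp add: C_def K_def inner_matrix_mult_right matrix_mul_assoc)
    also have "\<dots> = (norm K)\<^sup>2"
      by (simp add: inner_matrix_mult_left K_def inner_commute power2_norm_eq_inner)
    finally show ?thesis .
  qed
  show ?thesis
    unfolding W power2_norm_eq_inner[of "A + transpose A + C"]
    using AA AAt AC AtC CC inner_transpose_transpose[of A A]
    by (simp add: inner_add_left inner_add_right inner_commute[of "transpose A" A]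
        inner_commute[of C A] inner_commute[of C "transpose A"])
qed

lemma inner_gram_nonneg_if_psd:
  fixes P :: "real^'r^'r" and D :: "real^'r^'d"
  assumes "\<And>v. 0 \<le> inner v (P *v v)"
  shows "0 \<le> inner P (transpose D ** D)"
  unfolding inner_transpose_mult_self by (intro sum_nonneg assms)

lemma inner_gram_gram_lower_bound:
  fixes U D :: "real^'r^'d"
  assumes lower: "\<And>v. \<sigma> * norm v \<le> norm (U *v v)" and "0 \<le> \<sigma>"
  shows "\<sigma>\<^sup>2 * (norm D)\<^sup>2 \<le> inner (transpose U ** U) (transpose D ** D)"
proof -
  have "\<sigma>\<^sup>2 * (norm D)\<^sup>2 = (\<Sum>a\<in>UNIV. (\<sigma> * norm (D $ a))\<^sup>2)"
    by (simp add: norm_matrix_sq_eq_sum_rows sum_distrib_left power_mult_distrib)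
  also have "\<dots> \<le> (\<Sum>a\<in>UNIV. (norm (U *v D $ a))\<^sup>2)"
    using \<open>0 \<le> \<sigma>\<close> by (intro sum_mono power_mono lower) simp
  also have "\<dots> = inner (transpose U ** U) (transpose D ** D)"
    by (simp add: inner_transpose_mult_self inner_gram_mult power2_norm_eq_inner)
  finally show ?thesis .
qed

lemma norm_gram_diff_lower_bound:
  fixes U X :: "real^'r^'d" and \<sigma> :: real
  assumes symmetric: "transpose (transpose U ** X) = transpose U ** X"
    and psd: "\<And>v. 0 \<le> inner v ((transpose U ** X) *v v)"
    and lower: "\<And>v. \<sigma> * norm v \<le> norm (U *v v)"
    and "0 \<le> \<sigma>"
  shows "sqrt (2 * (sqrt 2 - 1)) * \<sigma> * norm (X - U) \<le> norm (X ** transpose X - U ** transpose U)"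
proof -
  define D where "D = X - U"
  have X: "X = U + D"
    by (simp add: D_def)
  define S where "S = transpose U ** D"
  define K where "K = transpose D ** D"
  define G where "G = transpose U ** U"
  have "G + transpose S = G + S"
    using symmetric by (simp add: X G_def S_def matrix_add_ldistrib transpose_add matrix_transpose_mul)
  then have "transpose S = S"
    by simp
  then have expansion: "(norm (X ** transpose X - U ** transpose U))\<^sup>2
      = 2 * inner G K + 2 * inner S S + 4 * inner S K + (norm K)\<^sup>2"
    using norm_gram_update_expansion[of U D] by (simp add: X S_def K_def G_def)
  have GS: "0 \<le> inner G K + inner S K"
    using inner_gram_nonneg_if_psd[of "transpose U ** X" D, OF psd]
    by (simp add: X G_def S_def K_def matrix_add_ldistrib inner_add_left)
  have GK: "\<sigma>\<^sup>2 * (norm D)\<^sup>2 \<le> inner G K"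
    unfolding G_def K_def using lower \<open>0 \<le> \<sigma>\<close> by (rule inner_gram_gram_lower_bound)
  have square: "0 \<le> 2 * inner S S + 2 * sqrt 2 * inner S K + (norm K)\<^sup>2"
  proof -
    have "0 \<le> (norm (sqrt 2 *\<^sub>R S + K))\<^sup>2"
      by simp
    also have "\<dots> = 2 * inner S S + 2 * sqrt 2 * inner S K + (norm K)\<^sup>2"
      by (simp add: power2_norm_eq_inner inner_add_left inner_add_right inner_commute[of K S]
          algebra_simps)
    finally show ?thesis .
  qed
  \<comment> \<open>\<open>|W|\<^sup>2 - 2(sqrt 2 - 1)<G,K> = (4 - 2 sqrt 2)(<G,K> + <S,K>) + |sqrt 2 S + K|\<^sup>2\<close>\<close>
  have "1 \<le> sqrt 2" and "sqrt 2 \<le> 2"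
    by (simp_all add: real_le_rsqrt real_sqrt_le_iff[of 2 4, simplified])
  then have "(2 * sqrt 2 - 2) * (\<sigma>\<^sup>2 * (norm D)\<^sup>2) \<le> (2 * sqrt 2 - 2) * inner G K"
    and "0 \<le> (4 - 2 * sqrt 2) * (inner G K + inner S K)"
    using GK GS by (simp_all add: mult_left_mono)
  then have "2 * (sqrt 2 - 1) * (\<sigma> * norm D)\<^sup>2 \<le> (norm (X ** transpose X - U ** transpose U))\<^sup>2"
    unfolding expansion using square by (simp add: algebra_simps power_mult_distrib)
  then have "sqrt (2 * (sqrt 2 - 1) * (\<sigma> * norm D)\<^sup>2)
      \<le> sqrt ((norm (X ** transpose X - U ** transpose U))\<^sup>2)"
    by (rule real_sqrt_le_mono)
  then show ?thesis
    using \<open>0 \<le> \<sigma>\<close> by (simp add: D_def real_sqrt_mult)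
qed

section \<open>The smallest singular value\<close>

lemma inner_symmetric_matrix_mult:
  assumes "transpose G = G"
  shows "inner (G *v v) w = inner v (G *v (w :: real^'n))"
  by (metis assms dot_lmul_matrix vector_transpose_matrix inner_commute)

lemma finite_mat_eigenvalues_symmetric:
  fixes G :: "real^'n^'n"
  assumes symmetric: "transpose G = G"
  shows "finite (mat_eigenvalues G)"
proof -
  define E where "E = mat_eigenvalues G"
  define vec where "vec = (\<lambda>c. SOME v. v \<noteq> 0 \<and> G *v v = c *\<^sub>R v)"
  have vec: "vec c \<noteq> 0 \<and> G *v vec c = c *\<^sub>R vec c" if "c \<in> E" for c
    unfolding vec_def by (rule someI_ex) (use that in \<open>simp add: E_def mat_eigenvalues_def\<close>)
  have inj: "inj_on vec E"
  proof (rule inj_onI)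
    fix c d assume cd: "c \<in> E" "d \<in> E" "vec c = vec d"
    then have "c *\<^sub>R vec c = d *\<^sub>R vec c"
      using vec by metis
    then show "c = d"
      using vec[OF cd(1)] by simp
  qed
  have "pairwise orthogonal (vec ` E)"
  proof (rule pairwiseI, clarify)
    fix c d assume cd: "c \<in> E" "d \<in> E" "vec c \<noteq> vec d"
    have "c * inner (vec c) (vec d) = d * inner (vec c) (vec d)"
      using inner_symmetric_matrix_mult[OF symmetric, of "vec c" "vec d"] vec[OF cd(1)] vec[OF cd(2)]
      by simp
    moreover have "c \<noteq> d"
      using cd by blast
    ultimately show "orthogonal (vec c) (vec d)"
      by (simp add: orthogonal_def)
  qed
  moreover have "0 \<notin> vec ` E"
    using vec by auto
  ultimately have "finite (vec ` E)"
    using pairwise_orthogonal_independent finiteI_independent by blast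
  then show ?thesis
    using inj finite_imageD unfolding E_def by blast
qed

lemma mat_eigenvalues_gram_nonneg:
  fixes X :: "real^'n^'m"
  assumes "c \<in> mat_eigenvalues (transpose X ** X)"
  shows "0 \<le> c"
proof -
  obtain v where v: "v \<noteq> 0" "(transpose X ** X) *v v = c *\<^sub>R v"
    using assms unfolding mat_eigenvalues_def by blast
  have "c * inner v v = (norm (X *v v))\<^sup>2"
    using inner_gram_mult[of v X v] v(2) by (simp add: power2_norm_eq_inner)
  then show ?thesis
    using v(1) by (metis inner_gt_zero_iff zero_le_mult_iff zero_le_power2 not_le)
qed

lemma gram_eigenvector_if_rayleigh_min:
  fixes X :: "real^'n^'m"
  assumes w: "norm w = 1"
    and min: "\<And>v. (norm (X *v w))\<^sup>2 * (norm v)\<^sup>2 \<le> (norm (X *v v))\<^sup>2"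
  shows "(transpose X ** X) *v w = (norm (X *v w))\<^sup>2 *\<^sub>R w"
proof -
  define c where "c = (norm (X *v w))\<^sup>2"
  have "inner (X *v w) (X *v z) = c * inner w z" for z
  proof -
    have "2 * (inner (X *v w) (X *v z) - c * inner w z) = 0"
    proof (rule nonneg_linear_quadratic_imp_zero)
      fix t :: real
      have "c * (norm (w + t *\<^sub>R z))\<^sup>2 \<le> (norm (X *v (w + t *\<^sub>R z)))\<^sup>2"
        unfolding c_def by (rule min)
      moreover have "(norm (X *v (w + t *\<^sub>R z)))\<^sup>2
          = c + 2 * t * inner (X *v w) (X *v z) + t\<^sup>2 * (norm (X *v z))\<^sup>2"
        by (simp add: c_def matrix_vector_right_distrib matrix_vector_mult_scaleR norm_add_scaleR_sq)
      moreover have "(norm (w + t *\<^sub>R z))\<^sup>2 = 1 + 2 * t * inner w z + t\<^sup>2 * (norm z)\<^sup>2"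
        using w by (simp add: norm_add_scaleR_sq)
      ultimately show "0 \<le> t * (2 * (inner (X *v w) (X *v z) - c * inner w z))
          + t\<^sup>2 * ((norm (X *v z))\<^sup>2 - c * (norm z)\<^sup>2)"
        by (simp add: algebra_simps)
    qed
    then show ?thesis
      by simp
  qed
  then have "inner z ((transpose X ** X) *v w - c *\<^sub>R w) = 0" for z
    using inner_gram_mult[of z X w]
    by (simp add: inner_diff_right inner_commute[of z w] inner_commute[of "X *v z"])
  then show ?thesis
    unfolding c_def by (metis inner_eq_zero_iff eq_iff_diff_eq_0)
qed

lemma gram_rayleigh_eigenvalue:
  fixes X :: "real^'n^'m"
  obtains c where "c \<in> mat_eigenvalues (transpose X ** X)"
    and "\<And>v. c * (norm v)\<^sup>2 \<le> (norm (X *v v))\<^sup>2"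
proof -
  define h where "h v = (norm (X *v v))\<^sup>2" for v
  have "axis undefined 1 \<in> sphere (0::real^'n) 1"
    by simp
  moreover have "continuous_on (sphere 0 1) h"
    unfolding h_def by (intro continuous_intros)
  ultimately obtain w where w: "norm w = 1" and w_min: "\<And>u. norm u = 1 \<Longrightarrow> h w \<le> h u"
    using continuous_attains_inf[OF compact_sphere, of 0 1 h] by auto
  have rayleigh: "h w * (norm v)\<^sup>2 \<le> h v" for v
  proof (cases "v = 0")
    case False
    then have "h w \<le> h (inverse (norm v) *\<^sub>R v)"
      by (intro w_min) simp
    also have "\<dots> = h v / (norm v)\<^sup>2"
      by (simp add: h_def matrix_vector_mult_scaleR power_mult_distrib field_simps)
    finally show ?thesis
      using False by (simp add: field_simps)
  qed (simp add: h_def)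
  then have "(transpose X ** X) *v w = h w *\<^sub>R w"
    unfolding h_def by (rule gram_eigenvector_if_rayleigh_min[OF w])
  then have "h w \<in> mat_eigenvalues (transpose X ** X)"
    using w unfolding mat_eigenvalues_def by (intro CollectI exI[of _ w]) auto
  then show ?thesis
    using that rayleigh by (simp add: h_def)
qed

lemma gram_min_eigenvalue:
  fixes X :: "real^'n^'m"
  defines "\<mu> \<equiv> Min (mat_eigenvalues (transpose X ** X))"
  shows "0 \<le> \<mu>" and "\<mu> * (norm v)\<^sup>2 \<le> (norm (X *v v))\<^sup>2"
proof -
  define E where "E = mat_eigenvalues (transpose X ** X)"
  obtain c where "c \<in> E" and c: "\<And>v. c * (norm v)\<^sup>2 \<le> (norm (X *v v))\<^sup>2"
    using gram_rayleigh_eigenvalue unfolding E_def by blast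
  moreover have "finite E"
    unfolding E_def by (rule finite_mat_eigenvalues_symmetric) (simp add: matrix_transpose_mul)
  ultimately have "\<mu> \<in> E" "\<mu> \<le> c"
    unfolding \<mu>_def E_def[symmetric] using Min_in Min_le by blast+
  then show "0 \<le> \<mu>"
    using mat_eigenvalues_gram_nonneg unfolding E_def by blast
  then show "\<mu> * (norm v)\<^sup>2 \<le> (norm (X *v v))\<^sup>2"
    using \<open>\<mu> \<le> c\<close> c[of v] by (meson mult_right_mono order.trans zero_le_power2)
qed

lemma sigma_r_nonneg: "0 \<le> sigma_r X"
  by (simp add: sigma_r_def gram_min_eigenvalue)

lemma sigma_r_le_norm_mult: "sigma_r X * norm v \<le> norm (X *v v)"
proof -
  have "sqrt (Min (mat_eigenvalues (transpose X ** X)) * (norm v)\<^sup>2) \<le> sqrt ((norm (X *v v))\<^sup>2)"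
    using gram_min_eigenvalue(2) by (rule real_sqrt_le_mono)
  then show ?thesis
    by (simp add: sigma_r_def real_sqrt_mult)
qed

section \<open>Matrices of maximal trace in their orthogonal orbit\<close>

definition reflection :: "'a::real_inner \<Rightarrow> 'a \<Rightarrow> 'a" where
  "reflection w x = x - (2 * inner x w / inner w w) *\<^sub>R w"

lemma reflection_alt: "reflection w x = x - inner x w *\<^sub>R ((2 / inner w w) *\<^sub>R w)"
  by (simp add: reflection_def)

lemma linear_reflection: "linear (reflection w)"
  by (rule linearI) (simp_all add: reflection_def inner_add_left add_divide_distrib
      distrib_left scaleR_add_left scaleR_diff_right algebra_simps)

lemma orthogonal_transformation_reflection: "orthogonal_transformation (reflection w)"
proof (cases "w = 0")
  case True
  then show ?thesis
    by (simp add: reflection_def[abs_def])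
next
  case False
  then have "inner (reflection w v) (reflection w u) = inner v u" for v u
    by (simp add: reflection_def inner_diff_left inner_diff_right inner_commute[of w u]
        field_simps)
  then show ?thesis
    by (simp add: orthogonal_transformation_def linear_reflection)
qed

lemma inner_matrix_eq_sum_axis:
  "inner (matrix f :: real^'n^'n) P = (\<Sum>j\<in>UNIV. inner (f (axis j 1)) (P *v axis j 1))"
proof -
  have "inner (matrix f) P = (\<Sum>i\<in>UNIV. \<Sum>j\<in>UNIV. f (axis j 1) $ i * P $ i $ j)"
    by (simp add: inner_vec_def matrix_def)
  also have "\<dots> = (\<Sum>j\<in>UNIV. \<Sum>i\<in>UNIV. f (axis j 1) $ i * P $ i $ j)"
    by (rule sum.swap)
  also have "\<dots> = (\<Sum>j\<in>UNIV. inner (f (axis j 1)) (P *v axis j 1))"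
    by (simp add: inner_vec_def matrix_vector_mult_basis column_def)
  finally show ?thesis .
qed

lemma trace_eq_sum_axis: "trace P = (\<Sum>j\<in>UNIV. inner (axis j 1) (P *v axis j 1))"
  by (simp add: trace_def inner_axis' matrix_vector_mult_basis column_def)

lemma sum_axis_rank_one_update:
  fixes P :: "real^'n^'n"
  shows "(\<Sum>j\<in>UNIV. inner (g (axis j 1) - inner (axis j 1) w *\<^sub>R v) (P *v axis j 1))
    = (\<Sum>j\<in>UNIV. inner (g (axis j 1)) (P *v axis j 1)) - inner v (P *v w)"
proof -
  have "(\<Sum>j\<in>UNIV. inner (inner (axis j 1) w *\<^sub>R v) (P *v axis j 1))
      = inner v (\<Sum>j\<in>UNIV. w $ j *\<^sub>R column j P)"
    by (simp add: inner_axis' matrix_vector_mult_basis inner_sum_right)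
  also have "\<dots> = inner v (P *v w)"
    by (simp add: matrix_mult_sum scalar_mult_eq_scaleR)
  finally show ?thesis
    by (simp add: inner_diff_left sum_subtractf)
qed

lemma trace_maximal_orthogonal_transformation:
  fixes P :: "real^'n^'n" and f :: "real^'n \<Rightarrow> real^'n"
  assumes max: "\<And>Q. orthogonal_matrix Q \<Longrightarrow> trace (transpose Q ** P) \<le> trace P"
    and f: "orthogonal_transformation f"
  shows "(\<Sum>j\<in>UNIV. inner (f (axis j 1)) (P *v axis j 1)) \<le> trace P"
  using max[of "matrix f"] f
  by (simp add: orthogonal_transformation_matrix inner_matrix_eq_trace[symmetric] inner_matrix_eq_sum_axis)

lemma trace_maximal_imp_psd:
  fixes P :: "real^'n^'n"
  assumes max: "\<And>Q. orthogonal_matrix Q \<Longrightarrow> trace (transpose Q ** P) \<le> trace P"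
  shows "0 \<le> inner w (P *v w)"
proof (cases "w = 0")
  case False
  have "trace P - inner ((2 / inner w w) *\<^sub>R w) (P *v w) \<le> trace P"
    using trace_maximal_orthogonal_transformation[OF max orthogonal_transformation_reflection[of w]]
      sum_axis_rank_one_update[of "\<lambda>x. x" w "(2 / inner w w) *\<^sub>R w" P]
    by (simp add: reflection_alt trace_eq_sum_axis)
  moreover have "0 < inner w w"
    using False by simp
  ultimately show ?thesis
    by (simp add: zero_le_divide_iff)
qed simp

lemma trace_maximal_two_reflections:
  fixes P :: "real^'n^'n"
  assumes max: "\<And>Q. orthogonal_matrix Q \<Longrightarrow> trace (transpose Q ** P) \<le> trace P"
    and u: "inner u u = 1"
  shows "2 * inner w u * inner u (P *v w) \<le> inner w (P *v w) + inner w w * inner u (P *v u)"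
proof (cases "w = 0")
  case False
  define v where "v = (2 / inner w w) *\<^sub>R reflection u w"
  have "(reflection u \<circ> reflection w) x = reflection u x - inner x w *\<^sub>R v" for x
    using linear_reflection[of u]
    by (simp add: v_def reflection_alt[of w] linear_diff linear_scale)
  then have "(\<Sum>j\<in>UNIV. inner ((reflection u \<circ> reflection w) (axis j 1)) (P *v axis j 1))
      = (\<Sum>j\<in>UNIV. inner (reflection u (axis j 1)) (P *v axis j 1)) - inner v (P *v w)"
    by (simp only: sum_axis_rank_one_update)
  also have "(\<Sum>j\<in>UNIV. inner (reflection u (axis j 1)) (P *v axis j 1))
      = trace P - inner (2 *\<^sub>R u) (P *v u)"
    using sum_axis_rank_one_update[of "\<lambda>x. x" u "2 *\<^sub>R u" P] u
    by (simp add: reflection_alt[of u] trace_eq_sum_axis)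
  finally have "(\<Sum>j\<in>UNIV. inner ((reflection u \<circ> reflection w) (axis j 1)) (P *v axis j 1))
      = trace P - inner (2 *\<^sub>R u) (P *v u) - inner v (P *v w)" .
  moreover have "(\<Sum>j\<in>UNIV. inner ((reflection u \<circ> reflection w) (axis j 1)) (P *v axis j 1))
      \<le> trace P"
    by (intro trace_maximal_orthogonal_transformation[OF max] orthogonal_transformation_compose
        orthogonal_transformation_reflection)
  ultimately have "0 \<le> inner (2 *\<^sub>R u) (P *v u) + inner v (P *v w)"
    by linarith
  then have "0 \<le> inner w w * (inner (2 *\<^sub>R u) (P *v u) + inner v (P *v w))"
    by simp
  also have "\<dots> = 2 * (inner w w * inner u (P *v u) + inner (reflection u w) (P *v w))"
    using False by (simp add: v_def field_simps)
  also have "inner (reflection u w) (P *v w) = inner w (P *v w) - 2 * inner w u * inner u (P *v w)"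
    using u by (simp add: reflection_def inner_diff_left)
  finally show ?thesis
    by simp
qed (use trace_maximal_imp_psd[OF max, of u] in simp)

lemma trace_maximal_inner_commute:
  fixes P :: "real^'n^'n"
  assumes max: "\<And>Q. orthogonal_matrix Q \<Longrightarrow> trace (transpose Q ** P) \<le> trace P"
    and u: "inner u u = 1"
  shows "inner u (P *v z) = inner z (P *v u)"
proof -
  define a where "a = inner u z"
  define b where "b = inner u (P *v u)"
  define c where "c = inner u (P *v z)"
  define c' where "c' = inner z (P *v u)"
  define d where "d = inner z (P *v z)"
  have "c' - c = 0"
  proof (rule nonneg_linear_quadratic_imp_zero)
    fix t :: real
    have e1: "inner (u + t *\<^sub>R z) (u + t *\<^sub>R z) = 1 + 2 * t * a + t\<^sup>2 * inner z z"
      using norm_add_scaleR_sq[of u t z] u by (simp add: power2_norm_eq_inner a_def)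
    have e2: "inner (u + t *\<^sub>R z) u = 1 + t * a"
      using u by (simp add: inner_add_left a_def inner_commute[of z u])
    have e3: "inner u (P *v (u + t *\<^sub>R z)) = b + t * c"
      by (simp add: matrix_vector_right_distrib matrix_vector_mult_scaleR inner_add_right b_def c_def)
    have e4: "inner (u + t *\<^sub>R z) (P *v (u + t *\<^sub>R z)) = b + t * c + t * c' + t\<^sup>2 * d"
      by (simp add: matrix_vector_right_distrib matrix_vector_mult_scaleR inner_add_left
          inner_add_right b_def c_def c'_def d_def power2_eq_square distrib_left)
    have "2 * (1 + t * a) * (b + t * c)
        \<le> (b + t * c + t * c' + t\<^sup>2 * d) + (1 + 2 * t * a + t\<^sup>2 * inner z z) * b"
      using trace_maximal_two_reflections[OF max u, of "u + t *\<^sub>R z"]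
      unfolding e1 e2 e3 e4 b_def .
    then show "0 \<le> t * (c' - c) + t\<^sup>2 * (d + inner z z * b - 2 * a * c)"
      by (simp add: algebra_simps power2_eq_square)
  qed
  then show ?thesis
    by (simp add: c_def c'_def)
qed

lemma trace_maximal_imp_symmetric:
  fixes P :: "real^'n^'n"
  assumes max: "\<And>Q. orthogonal_matrix Q \<Longrightarrow> trace (transpose Q ** P) \<le> trace P"
  shows "transpose P = P"
proof -
  have entry: "P $ i $ j = inner (axis i 1) (P *v axis j 1)" for i j
    by (simp add: inner_axis' matrix_vector_mult_basis column_def)
  have "P $ i $ j = P $ j $ i" for i j
    using entry[of i j] entry[of j i] trace_maximal_inner_commute[OF max, of "axis i 1" "axis j 1"]
    by simp
  then show ?thesis
    by (simp add: vec_eq_iff transpose_def)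
qed

section \<open>The nearest point of the solution set\<close>

lemma continuous_on_matrix_mult [continuous_intros]:
  fixes F :: "'a::topological_space \<Rightarrow> real^'k^'m" and H :: "'a \<Rightarrow> real^'n^'k"
  shows "continuous_on S F \<Longrightarrow> continuous_on S H \<Longrightarrow> continuous_on S (\<lambda>x. F x ** H x)"
  unfolding matrix_matrix_mult_def by (intro continuous_intros)

lemma continuous_on_transpose [continuous_intros]:
  fixes F :: "'a::topological_space \<Rightarrow> real^'n^'m"
  shows "continuous_on S F \<Longrightarrow> continuous_on S (\<lambda>x. transpose (F x))"
  unfolding transpose_def by (intro continuous_intros)

lemma norm_orthogonal_matrix:
  fixes Q :: "real^'n^'n"
  assumes "orthogonal_matrix Q"
  shows "norm Q = sqrt (real CARD('n))"
  using assms by (simp add: norm_eq_sqrt_inner inner_matrix_eq_trace orthogonal_matrix trace_I)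

lemma compact_orthogonal_matrices: "compact {Q :: real^'n^'n. orthogonal_matrix Q}"
proof (rule compact_eq_bounded_closed[THEN iffD2], intro conjI)
  show "bounded {Q :: real^'n^'n. orthogonal_matrix Q}"
    by (auto simp: bounded_iff norm_orthogonal_matrix)
  have "closed {Q :: real^'n^'n. transpose Q ** Q = mat 1}"
    by (intro closed_Collect_eq continuous_on_matrix_mult continuous_on_transpose
        continuous_on_id continuous_on_const)
  then show "closed {Q :: real^'n^'n. orthogonal_matrix Q}"
    by (simp add: orthogonal_matrix)
qed

lemma norm_mult_orthogonal_matrix:
  fixes U :: "real^'n^'m" and Q :: "real^'n^'n"
  assumes "orthogonal_matrix Q"
  shows "norm (U ** Q) = norm U"
proof -
  have "inner (U ** Q) (U ** Q) = inner U U"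
    using assms by (simp add: inner_matrix_mult_right matrix_mul_assoc[symmetric] orthogonal_matrix_def)
  then show ?thesis
    by (simp add: norm_eq_sqrt_inner)
qed

lemma exists_nearest_orthogonal_factor:
  fixes X Y :: "real^'r^'d"
  obtains R where "orthogonal_matrix R"
    and "\<And>Q. orthogonal_matrix Q \<Longrightarrow> norm (X - Y ** R) \<le> norm (X - Y ** Q)"
proof -
  have "continuous_on {Q :: real^'r^'r. orthogonal_matrix Q} (\<lambda>Q. norm (X - Y ** Q))"
    by (intro continuous_intros)
  moreover have "mat 1 \<in> {Q :: real^'r^'r. orthogonal_matrix Q}"
    by (simp add: orthogonal_matrix_id)
  ultimately show ?thesis
    using continuous_attains_inf[OF compact_orthogonal_matrices] that by blast
qed

lemma nearest_orthogonal_factor_trace_maximal: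
  fixes X Y :: "real^'r^'d" and R Q :: "real^'r^'r"
  assumes R: "orthogonal_matrix R"
    and nearest: "\<And>Q. orthogonal_matrix Q \<Longrightarrow> norm (X - Y ** R) \<le> norm (X - Y ** Q)"
    and Q: "orthogonal_matrix Q"
  shows "trace (transpose Q ** (transpose (Y ** R) ** X)) \<le> trace (transpose (Y ** R) ** X)"
proof -
  define U where "U = Y ** R"
  have "norm (X - U) \<le> norm (X - U ** Q)"
    using nearest[OF orthogonal_matrix_mul[OF R Q]] by (simp add: U_def matrix_mul_assoc)
  then have "(norm (X - U))\<^sup>2 \<le> (norm (X - U ** Q))\<^sup>2"
    by (intro power_mono) simp_all
  moreover have "inner (U ** Q) (U ** Q) = inner U U"
    using norm_mult_orthogonal_matrix[OF Q, of U] by (metis power2_norm_eq_inner)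
  ultimately have "inner (U ** Q) X \<le> inner U X"
    by (simp add: power2_norm_eq_inner inner_diff_left inner_diff_right inner_commute[of X U] inner_commute[of X "U ** Q"])
  then show ?thesis
    by (simp add: U_def inner_matrix_eq_trace matrix_transpose_mul matrix_mul_assoc)
qed

lemma infdist_sol_set_le_norm_gram_diff:
  fixes X Xs :: "real^'r^'d"
  shows "sqrt (2 * (sqrt 2 - 1)) * sigma_r Xs * infdist X (sol_set Xs)
    \<le> norm (X ** transpose X - Xs ** transpose Xs)"
proof -
  obtain R where R: "orthogonal_matrix R"
    and nearest: "\<And>Q. orthogonal_matrix Q \<Longrightarrow> norm (X - Xs ** R) \<le> norm (X - Xs ** Q)"
    using exists_nearest_orthogonal_factor[of X Xs] by blast
  define U where "U = Xs ** R"
  have max: "\<And>Q. orthogonal_matrix Q \<Longrightarrow>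
      trace (transpose Q ** (transpose U ** X)) \<le> trace (transpose U ** X)"
    unfolding U_def by (rule nearest_orthogonal_factor_trace_maximal[OF R nearest])
  have "U ** transpose U = Xs ** (R ** transpose R) ** transpose Xs"
    by (simp add: U_def matrix_transpose_mul matrix_mul_assoc)
  then have UU: "U ** transpose U = Xs ** transpose Xs"
    using R by (simp add: orthogonal_matrix_def)
  have "orthogonal_transformation (\<lambda>v. R *v v)"
    using R by (simp add: orthogonal_transformation_matrix)
  then have sigma_U: "sigma_r Xs * norm v \<le> norm (U *v v)" for v
    using sigma_r_le_norm_mult[of Xs "R *v v"]
    by (simp add: U_def matrix_vector_mul_assoc orthogonal_transformation_norm)
  have "sqrt (2 * (sqrt 2 - 1)) * sigma_r Xs * norm (X - U)
      \<le> norm (X ** transpose X - Xs ** transpose Xs)"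
    using norm_gram_diff_lower_bound[OF trace_maximal_imp_symmetric[OF max]
        trace_maximal_imp_psd[OF max] sigma_U sigma_r_nonneg]
    by (simp add: UU)
  moreover have "infdist X (sol_set Xs) \<le> norm (X - U)"
    using infdist_le[of U "sol_set Xs" X] R by (auto simp: sol_set_def U_def dist_norm)
  moreover have "0 \<le> sqrt (2 * (sqrt 2 - 1)) * sigma_r Xs"
    using sigma_r_nonneg[of Xs] by simp
  ultimately show ?thesis
    by (meson mult_left_mono order.trans)
qed

lemma rank_add_le:
  fixes A B :: "real^'n^'m"
  shows "rank (A + B) \<le> rank A + rank B"
proof -
  define S where "S = range (\<lambda>x. A *v x)"
  define T where "T = range (\<lambda>x. B *v x)"
  have "subspace S" "subspace T"
    unfolding S_def T_def by (simp_all add: linear_subspace_image matrix_vector_mul_linear)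
  have "range (\<lambda>x. (A + B) *v x) \<subseteq> {x + y | x y. x \<in> S \<and> y \<in> T}"
    by (auto simp: S_def T_def matrix_vector_mult_add_rdistrib)
  then have "rank (A + B) \<le> dim {x + y | x y. x \<in> S \<and> y \<in> T}"
    unfolding rank_dim_range by (rule dim_subset)
  also have "\<dots> \<le> dim S + dim T"
    using dim_sums_Int[OF \<open>subspace S\<close> \<open>subspace T\<close>] by linarith
  finally show ?thesis
    by (simp add: S_def T_def rank_dim_range)
qed

lemma rank_mult_transpose_le:
  fixes X :: "real^'r^'d" and Y :: "real^'r^'d"
  shows "rank (X ** transpose Y) \<le> CARD('r)"
proof -
  have "rank (X ** transpose Y) \<le> rank (transpose Y)"
    by (rule rank_mul_le_right)
  also have "\<dots> \<le> CARD('r)"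
    using rank_bound[of "transpose Y"] by simp
  finally show ?thesis .
qed

lemma rank_gram_diff_le:
  fixes X Y :: "real^'r^'d"
  shows "rank (X ** transpose X - Y ** transpose Y) \<le> 2 * CARD('r)"
proof -
  have "X ** transpose X - Y ** transpose Y = X ** transpose X + (- Y) ** transpose Y"
    by (simp add: matrix_matrix_mult_def vec_eq_iff sum_negf)
  also have "rank \<dots> \<le> rank (X ** transpose X) + rank ((- Y) ** transpose Y)"
    by (rule rank_add_le)
  also have "\<dots> \<le> 2 * CARD('r)"
    using rank_mult_transpose_le[of X X] rank_mult_transpose_le[of "- Y" Y] by simp
  finally show ?thesis .
qed

lemma l1_on_exact_diff_le:
  fixes p q b :: "real^'m" and I :: "'m set"
  assumes exact: "\<And>i. i \<notin> I \<Longrightarrow> b $ i = q $ i"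
  shows "l1_on (- I) (p - q) - l1_on I (p - q) \<le> l1_on UNIV (p - b) - l1_on UNIV (q - b)"
proof -
  define g where "g i = \<bar>(p - b) $ i\<bar> - \<bar>(q - b) $ i\<bar>" for i
  have "l1_on (- I) (p - q) = (\<Sum>i\<in>- I. g i)"
    unfolding l1_on_def g_def using exact by (intro sum.cong) auto
  moreover have "- l1_on I (p - q) \<le> (\<Sum>i\<in>I. g i)"
    unfolding l1_on_def g_def sum_negf[symmetric] by (intro sum_mono) (simp; arith)
  moreover have "(\<Sum>i\<in>I. g i) + (\<Sum>i\<in>- I. g i) = l1_on UNIV (p - b) - l1_on UNIV (q - b)"
    unfolding l1_on_def g_def sum_subtractf[symmetric]
    by (subst sum.union_disjoint[symmetric]) auto
  ultimately show ?thesis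
    by linarith
qed

lemma obj_f_diff_ge_l1_split:
  fixes A :: "real^'d^'d \<Rightarrow> real^'m" and X Xs :: "real^'r^'d"
  assumes lin: "linear A"
    and exact: "\<And>i. i \<notin> I \<Longrightarrow> b $ i = A (Xs ** transpose Xs) $ i"
  defines "W \<equiv> X ** transpose X - Xs ** transpose Xs"
  shows "(1 / real CARD('m)) * l1_on (- I) (A W) - (1 / real CARD('m)) * l1_on I (A W)
    \<le> obj_f A b X - obj_f A b Xs"
proof -
  have "(1 / real CARD('m)) * (l1_on (- I) (A W) - l1_on I (A W))
      \<le> (1 / real CARD('m))
        * (l1_on UNIV (A (X ** transpose X) - b) - l1_on UNIV (A (Xs ** transpose Xs) - b))"
    using l1_on_exact_diff_le[of I b "A (Xs ** transpose Xs)" "A (X ** transpose X)"] exact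
    by (intro mult_left_mono) (simp_all add: W_def linear_diff[OF lin])
  then show ?thesis
    by (simp add: obj_f_def right_diff_distrib)
qed

theorem proposition4p6:
  fixes Xs :: "real^'r^'d"
    and A :: "real^'d^'d \<Rightarrow> real^'m"
    and b :: "real^'m"
    and I :: "'m set"
    and \<kappa>3 :: real
  assumes rank_Xs: "rank Xs = CARD('r)"
    and lin: "linear A"
    and kappa_pos: "\<kappa>3 > 0"
    and exact: "\<And>i. i \<notin> I \<Longrightarrow> b $ i = A (Xs ** transpose Xs) $ i"
    and sharpness: "\<And>W :: real^'d^'d. rank W \<le> 2 * CARD('r) \<Longrightarrow>
        \<kappa>3 * norm W \<le> (1 / real CARD('m)) * l1_on (- I) (A W)
                        - (1 / real CARD('m)) * l1_on I (A W)"
  shows "\<forall>X :: real^'r^'d.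
     obj_f A b X - obj_f A b Xs
       \<ge> \<kappa>3 * sqrt (2 * (sqrt 2 - 1)) * sigma_r Xs * infdist X (sol_set Xs)"
proof (intro allI)
  fix X :: "real^'r^'d"
  define W where "W = X ** transpose X - Xs ** transpose Xs"
  have "\<kappa>3 * sqrt (2 * (sqrt 2 - 1)) * sigma_r Xs * infdist X (sol_set Xs) \<le> \<kappa>3 * norm W"
    using infdist_sol_set_le_norm_gram_diff[of Xs X] kappa_pos by (simp add: W_def mult.assoc)
  also have "\<dots> \<le> (1 / real CARD('m)) * l1_on (- I) (A W) - (1 / real CARD('m)) * l1_on I (A W)"
    using sharpness rank_gram_diff_le[of X Xs] by (simp add: W_def)
  also have "\<dots> \<le> obj_f A b X - obj_f A b Xs"
    unfolding W_def using lin exact by (rule obj_f_diff_ge_l1_split)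
  finally show "\<kappa>3 * sqrt (2 * (sqrt 2 - 1)) * sigma_r Xs * infdist X (sol_set Xs)
      \<le> obj_f A b X - obj_f A b Xs" .
qed

end
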